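(* Let $\langle C_\delta:\delta\in\mathrm{Lim}\rangle$ be a $\clubsuit$-sequence and define $\mathrm{Lim}_n$ and $C^n_\delta$ as below. Then for every $n\in\omega$ and every uncountable $S\subseteq\omega_1$, the set $\{\delta\in\mathrm{Lim}_n: C^n_\delta\subseteq S\}$ is stationary in $\omega_1$.
   Context: $\mathrm{Lim}$ is the set of nonzero countable limit ordinals. A $\clubsuit$-sequence is a sequence $\langle C_\delta:\delta\in\mathrm{Lim}\rangle$ with $C_\delta\subseteq\delta$ of order type $\omega$, $\sup C_\delta=\delta$, such that for every uncountable $S\subseteq\omega_1$ the set $\{\delta\in\mathrm{Lim}:C_\delta\subseteq S\}$ is stationary. Define $\mathrm{Lim}_0=\mathrm{Lim}$, $\mathrm{Lim}_{n+1}=\{\delta\in\mathrm{Lim}:C_\delta\subseteq\mathrm{Lim}_n\}$; $C^0_\delta=C_\delta$ for $\delta\in\mathrm{Lim}_0$, and $C^{n+1}_\delta=\bigcup_{\xi\in C_\delta}C^n_\xi$ for $\delta\in\mathrm{Lim}_{n+1}$. *)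

theory Defs
  imports "HOL-Library.Countable_Set"
begin

text \<open>omega_1 is modelled as an arbitrary well-ordered type 'a that is uncountable and all
of whose proper initial segments are countable (this characterises omega_1 up to isomorphism).\<close>

definition is_omega1_type :: "'a::wellorder itself \<Rightarrow> bool" where
  "is_omega1_type _ \<longleftrightarrow> uncountable (UNIV :: 'a set) \<and> (\<forall>x::'a. countable {y. y < x})"

definition Lim :: "'a::wellorder set" where
  "Lim = {\<delta>. (\<exists>y. y < \<delta>) \<and> (\<forall>y. y < \<delta> \<longrightarrow> (\<exists>z. y < z \<and> z < \<delta>))}"

definition otype_omega :: "'a::wellorder set \<Rightarrow> bool" where
  "otype_omega C \<longleftrightarrow> infinite C \<and> (\<forall>c\<in>C. finite {x\<in>C. x < c})"

definition unbounded :: "'a::wellorder set \<Rightarrow> bool" where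
  "unbounded C \<longleftrightarrow> (\<forall>x. \<exists>y\<in>C. x < y)"

definition closed_set :: "'a::wellorder set \<Rightarrow> bool" where
  "closed_set C \<longleftrightarrow> (\<forall>\<delta>. (\<exists>y. y < \<delta>) \<and> (\<forall>y. y < \<delta> \<longrightarrow> (\<exists>c\<in>C. y < c \<and> c < \<delta>)) \<longrightarrow> \<delta> \<in> C)"

definition club :: "'a::wellorder set \<Rightarrow> bool" where
  "club C \<longleftrightarrow> closed_set C \<and> unbounded C"

definition stationary :: "'a::wellorder set \<Rightarrow> bool" where
  "stationary S \<longleftrightarrow> (\<forall>C. club C \<longrightarrow> S \<inter> C \<noteq> {})"

definition clubsuit_seq :: "('a::wellorder \<Rightarrow> 'a set) \<Rightarrow> bool" where
  "clubsuit_seq C \<longleftrightarrow>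
     (\<forall>\<delta>\<in>Lim. C \<delta> \<subseteq> {..<\<delta>} \<and> otype_omega (C \<delta>) \<and> (\<forall>y. y < \<delta> \<longrightarrow> (\<exists>c\<in>C \<delta>. y < c))) \<and>
     (\<forall>S. uncountable S \<longrightarrow> stationary {\<delta>\<in>Lim. C \<delta> \<subseteq> S})"

fun LimN :: "('a::wellorder \<Rightarrow> 'a set) \<Rightarrow> nat \<Rightarrow> 'a set" where
  "LimN C 0 = Lim"
| "LimN C (Suc n) = {\<delta>\<in>Lim. C \<delta> \<subseteq> LimN C n}"

fun CN :: "('a::wellorder \<Rightarrow> 'a set) \<Rightarrow> nat \<Rightarrow> 'a \<Rightarrow> 'a set" where
  "CN C 0 \<delta> = C \<delta>"
| "CN C (Suc n) \<delta> = (\<Union>\<xi>\<in>C \<delta>. CN C n \<xi>)"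

end

theory Submission
  imports Defs
begin

text \<open>A stationary subset of omega_1 is uncountable, since
  countable sets are bounded and final segments are clubs. So if
  T = {\<xi> \<in> Lim_n. C^n_\<xi> \<subseteq> S} is stationary, the clubsuit property applies to T, and
  every \<delta> \<in> Lim with C_\<delta> \<subseteq> T lies in Lim_(n+1) and satisfies C^(n+1)_\<delta> \<subseteq> S.\<close>

lemma omega1_gt_ex:
  assumes "is_omega1_type TYPE('a::wellorder)"
  shows "\<exists>y. (x::'a) < y"
proof (rule ccontr)
  assume "\<nexists>y. x < y"
  hence "UNIV \<subseteq> insert x {y. y < x}" by (auto simp: not_less order.order_iff_strict)
  moreover have "countable (insert x {y. y < x})"
    using assms by (simp add: is_omega1_type_def)
  ultimately have "countable (UNIV :: 'a set)" by (rule countable_subset)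
  with assms show False by (simp add: is_omega1_type_def)
qed

lemma omega1_countable_bounded:
  assumes "is_omega1_type TYPE('a::wellorder)" and "countable (A::'a set)"
  shows "\<exists>x. \<forall>y\<in>A. y \<le> x"
proof (rule ccontr)
  assume "\<nexists>x. \<forall>y\<in>A. y \<le> x"
  hence "UNIV \<subseteq> (\<Union>a\<in>A. {y. y < a})" by (auto simp: not_le)
  moreover have "countable (\<Union>a\<in>A. {y. y < a})"
    using assms by (simp add: is_omega1_type_def)
  ultimately have "countable (UNIV :: 'a set)" by (rule countable_subset)
  with assms show False by (simp add: is_omega1_type_def)
qed
lemma closed_set_greaterThan: "closed_set {x<..}"
  unfolding closed_set_def by (auto intro: less_trans)

lemma club_greaterThan:
  assumes "is_omega1_type TYPE('a::wellorder)"
  shows "club {(x::'a)<..}"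
  unfolding club_def unbounded_def
proof (intro conjI allI closed_set_greaterThan)
  fix z :: 'a
  obtain y where "max x z < y" using omega1_gt_ex[OF assms] by blast
  thus "\<exists>y\<in>{x<..}. z < y" by auto
qed

lemma stationary_imp_uncountable:
  assumes "is_omega1_type TYPE('a::wellorder)" and "stationary (T::'a set)"
  shows "uncountable T"
proof
  assume "countable T"
  then obtain x where "\<forall>y\<in>T. y \<le> x" using omega1_countable_bounded assms(1) by blast
  hence "T \<inter> {x<..} = {}" by (auto simp: not_less)
  with assms club_greaterThan show False unfolding stationary_def by blast
qed

lemma stationary_mono: "stationary A \<Longrightarrow> A \<subseteq> B \<Longrightarrow> stationary B"
  unfolding stationary_def by blast

theorem mainTheorem16:
  fixes C :: "'a::wellorder \<Rightarrow> 'a set" and n :: nat and S :: "'a set"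
  assumes "is_omega1_type TYPE('a)"
    and "clubsuit_seq C"
    and "uncountable S"
  shows "stationary {\<delta>\<in>LimN C n. CN C n \<delta> \<subseteq> S}"
  using assms(3)
proof (induction n arbitrary: S)
  case 0
  then show ?case using assms(2) unfolding clubsuit_seq_def by simp
next
  case (Suc n)
  define T where "T = {\<xi>\<in>LimN C n. CN C n \<xi> \<subseteq> S}"
  have "uncountable T"
    using Suc stationary_imp_uncountable[OF assms(1)] unfolding T_def by blast
  hence "stationary {\<delta>\<in>Lim. C \<delta> \<subseteq> T}"
    using assms(2) unfolding clubsuit_seq_def by blast
  moreover have "{\<delta>\<in>Lim. C \<delta> \<subseteq> T} \<subseteq> {\<delta>\<in>LimN C (Suc n). CN C (Suc n) \<delta> \<subseteq> S}"
    unfolding T_def by auto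
  ultimately show ?case using stationary_mono by blast
qed

end
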